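(* Let $F_1,\dots,F_n:\mathbb{R}^d\to\mathbb{R}^d$, $F=\frac1n\sum_{i=1}^nF_i$, and let $x^*$ satisfy $F(x^* )=0$. Assume $F$ is $L$-Lipschitz and $\mu$-quasi strongly monotone ($\mu>0$), and that the Expected Residual condition holds with parameter $\delta>0$ for $g=F_v$, $v\sim\mathcal D$. Let $\sigma_*^2=\mathbb{E}\|F_v(x^* )\|^2<\infty$. Run SPEG with $\gamma_k=\omega_k=\omega$ for all $k$, where $0<\omega\le\min\{\frac{\mu}{18\delta},\frac{1}{4L}\}$. Then for all $k\ge0$, $$R_k^2\le\Big(1-\frac{\omega\mu}{2}\Big)^kR_0^2+\frac{24\omega\sigma_*^2}{\mu},$$ where $R_k^2:=\mathbb{E}\big[\|x_k-x^*\|^2+\|x_k-\hat x_{k-1}\|^2\big]$. Consequently, for any $\varepsilon>0$, choosing $\omega=\min\{\frac{\mu}{18\delta},\frac1{4L},\frac{\varepsilon\mu}{48\sigma_*^2}\}$, SPEG achieves $\mathbb{E}\|x_K-x^*\|^2\le\varepsilon$ after any $$K\ge\max\Big\{\frac{8L}{\mu},\frac{36\delta}{\mu^2},\frac{96\sigma_*^2}{\varepsilon\mu^2}\Big\}\log\Big(\frac{2R_0^2}{\varepsilon}\Big)$$ iterations.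
   Context: Problem: find $x^*$ with $F(x^* )=0$. $F$ is $L$-Lipschitz: $\|F(x)-F(y)\|\le L\|x-y\|$. $\mu$-quasi strongly monotone: $\langle F(x),x-x^*\rangle\ge\mu\|x-x^*\|^2$ for all $x$. A sampling distribution $\mathcal D$ is a distribution of a random vector $v\in\mathbb{R}^n_+$ with $\mathbb{E}_{\mathcal D}[v_i]=1$ for all $i$; $F_v(x):=\frac1n\sum_{i=1}^nv_iF_i(x)$. Expected Residual condition with parameter $\delta$: $\mathbb{E}\|(F_v(x)-F_v(x^* ))-(F(x)-F(x^* ))\|^2\le\frac\delta2\|x-x^*\|^2$ for all $x$. SPEG (stochastic past extragradient): given $x_0$, set $\hat x_{-1}=x_0$ and for $k\ge0$: $\hat x_k=x_k-\gamma_kF_{v_{k-1}}(\hat x_{k-1})$, $x_{k+1}=x_k-\omega_kF_{v_k}(\hat x_k)$, where $v_{-1},v_0,v_1,\dots$ are i.i.d. samples from $\mathcal D$. Expectations are over all randomness of the algorithm. *)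

theory Defs
  imports "HOL-Analysis.Analysis" "HOL-Probability.Probability"
begin

definition Fmean :: "nat \<Rightarrow> (nat \<Rightarrow> 'a::real_normed_vector \<Rightarrow> 'a) \<Rightarrow> 'a \<Rightarrow> 'a" where
  "Fmean n F x = (1 / real n) *\<^sub>R (\<Sum>i<n. F i x)"

definition Fsamp :: "nat \<Rightarrow> (nat \<Rightarrow> 'a::real_normed_vector \<Rightarrow> 'a) \<Rightarrow> (nat \<Rightarrow> real) \<Rightarrow> 'a \<Rightarrow> 'a" where
  "Fsamp n F v x = (1 / real n) *\<^sub>R (\<Sum>i<n. v i *\<^sub>R F i x)"

definition sampling_distribution :: "nat \<Rightarrow> (nat \<Rightarrow> real) measure \<Rightarrow> bool" where
  "sampling_distribution n D \<longleftrightarrow>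
     prob_space D \<and> sets D = sets (PiM {..<n} (\<lambda>_. borel)) \<and>
     (AE v in D. \<forall>i<n. 0 \<le> v i) \<and>
     (\<forall>i<n. integrable D (\<lambda>v. v i) \<and> (\<integral>v. v i \<partial>D) = 1)"

text \<open>SPEG iterates driven by a sample sequence w, where w 0 = v_{-1} and w (k+1) = v_k.
  spec_state n F gam om x0 w k = (x_k, xhat_{k-1}), with xhat_{-1} = x0.\<close>
primrec speg_state :: "nat \<Rightarrow> (nat \<Rightarrow> 'a::real_normed_vector \<Rightarrow> 'a) \<Rightarrow> (nat \<Rightarrow> real) \<Rightarrow> (nat \<Rightarrow> real)
     \<Rightarrow> 'a \<Rightarrow> (nat \<Rightarrow> nat \<Rightarrow> real) \<Rightarrow> nat \<Rightarrow> 'a \<times> 'a" where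
  "speg_state n F gam om x0 w 0 = (x0, x0)"
| "speg_state n F gam om x0 w (Suc k) =
     (let xk = fst (speg_state n F gam om x0 w k);
          xh = xk - gam k *\<^sub>R Fsamp n F (w k) (snd (speg_state n F gam om x0 w k))
      in (xk - om k *\<^sub>R Fsamp n F (w (Suc k)) xh, xh))"

definition iid_samples :: "(nat \<Rightarrow> real) measure \<Rightarrow> (nat \<Rightarrow> nat \<Rightarrow> real) measure" where
  "iid_samples D = PiM UNIV (\<lambda>_::nat. D)"

definition Rsq :: "nat \<Rightarrow> (nat \<Rightarrow> 'a::real_normed_vector \<Rightarrow> 'a) \<Rightarrow> (nat \<Rightarrow> real) measure
     \<Rightarrow> real \<Rightarrow> 'a \<Rightarrow> 'a \<Rightarrow> nat \<Rightarrow> ennreal" where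
  "Rsq n F D om x0 xs k =
     (\<integral>\<^sup>+ w. ennreal (norm (fst (speg_state n F (\<lambda>_. om) (\<lambda>_. om) x0 w k) - xs)^2
               + norm (fst (speg_state n F (\<lambda>_. om) (\<lambda>_. om) x0 w k)
                       - snd (speg_state n F (\<lambda>_. om) (\<lambda>_. om) x0 w k))^2) \<partial>iid_samples D)"

end

theory Submission
  imports Defs
begin

text \<open>
  The proof is a Lyapunov argument for R_k^2 = E[|x_k - x*|^2 + |x_k - xhat_{k-1}|^2].
  Conditioning on the fresh sample v_k, the bias-variance decomposition replaces F_{v_k} by F at
  the price of its variance, which Expected Residual and sigma_*^2 bound by
  delta |xhat_k - x*|^2 + 2 sigma_*^2. In the remaining deterministic past-extragradient step,
  quasi strong monotonicity at xhat_k contracts |x_k - x*|^2, and Lipschitz continuity between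
  xhat_k and xhat_{k-1} leaves the error |F_{v_{k-1}}(xhat_{k-1}) - F(xhat_{k-1})|^2, whose
  expectation over v_{k-1} is bounded in the same way. For omega <= min(mu/(18 delta), 1/(4L))
  this gives R_{k+1}^2 <= (1 - omega mu/2) R_k^2 + 12 omega^2 sigma_*^2, which unrolls to the
  claimed bound; the iteration count follows from (1 - t)^K <= exp(-t K).
\<close>

lemma power2_norm_add_le:
  fixes a b :: "'a::real_normed_vector"
  shows "(norm (a + b))\<^sup>2 \<le> 2 * (norm a)\<^sup>2 + 2 * (norm b)\<^sup>2"
proof -
  have "(norm (a + b))\<^sup>2 \<le> (norm a + norm b)\<^sup>2"
    by (simp add: norm_triangle_ineq power_mono)
  also have "\<dots> \<le> 2 * (norm a)\<^sup>2 + 2 * (norm b)\<^sup>2"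
    using sum_squares_bound[of "norm a" "norm b"] by (simp add: power2_sum)
  finally show ?thesis .
qed

lemma power2_norm_diff_scaleR:
  fixes d y :: "'a::real_inner"
  shows "(norm (d - w *\<^sub>R y))\<^sup>2 = (norm d)\<^sup>2 - 2 * w * inner d y + w\<^sup>2 * (norm y)\<^sup>2"
  unfolding power2_norm_eq_inner
  by (simp only: inner_diff_left inner_diff_right inner_scaleR_left inner_scaleR_right inner_commute[of y d])
     (simp add: algebra_simps power2_eq_square)

lemma ennreal_affine_recurrence_le:
  fixes R :: "nat \<Rightarrow> ennreal"
  assumes q: "0 \<le> q" "q < 1" and c: "0 \<le> c"
    and step: "\<And>k. R (Suc k) \<le> ennreal q * R k + ennreal c"
  shows "R k \<le> ennreal (q ^ k) * R 0 + ennreal (c / (1 - q))"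
proof (induction k)
  case (Suc k)
  have "R (Suc k) \<le> ennreal q * (ennreal (q ^ k) * R 0 + ennreal (c / (1 - q))) + ennreal c"
    using step[of k] Suc.IH by (meson add_right_mono mult_left_mono order.trans zero_le)
  also have "\<dots> = ennreal (q ^ Suc k) * R 0 + ennreal (q * (c / (1 - q)) + c)"
    using q c by (simp add: distrib_left ennreal_mult[symmetric] ennreal_plus[symmetric]
        mult.assoc[symmetric] add.assoc del: ennreal_plus)
  also have "q * (c / (1 - q)) + c = c / (1 - q)"
    using q by (simp add: field_simps)
  finally show ?case .
qed simp

lemma one_minus_power_mult_le:
  fixes t r e M :: real
  assumes t: "0 < t" "t \<le> 1" and e: "0 < e" and r: "0 \<le> r"
    and M: "1 / t \<le> M" and K: "M * ln (r / e) \<le> real K"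
  shows "(1 - t) ^ K * r \<le> e"
proof (cases "r \<le> e")
  case True
  have "(1 - t) ^ K * r \<le> 1 * r" using t r by (intro mult_right_mono power_le_one) auto
  with True show ?thesis by simp
next
  case False
  then have ln_pos: "0 < ln (r / e)" using e by simp
  have "ln (r / e) = t * (1 / t * ln (r / e))" using t by simp
  also have "\<dots> \<le> t * real K"
    using mult_right_mono[OF M less_imp_le[OF ln_pos]] K t by (intro mult_left_mono) auto
  finally have ln_le: "ln (r / e) \<le> real K * t" by (simp add: mult.commute)
  have "(1 - t) ^ K \<le> exp (- t) ^ K"
    using t exp_ge_add_one_self[of "- t"] by (intro power_mono) auto
  also have "\<dots> = exp (- (real K * t))" by (simp add: exp_of_nat_mult[symmetric])
  also have "\<dots> \<le> exp (- ln (r / e))" using ln_le by simp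
  also have "\<dots> = e / r" using e False by (simp add: exp_minus)
  finally show ?thesis using e False by (simp add: field_simps)
qed

section \<open>The past-extragradient step\<close>

lemma quasi_strongly_monotone_le_lipschitz:
  fixes G :: "'a::euclidean_space \<Rightarrow> 'a"
  assumes root: "G xs = 0" and lip: "L-lipschitz_on UNIV G"
    and qsm: "\<And>x. \<mu> * (norm (x - xs))\<^sup>2 \<le> inner (G x) (x - xs)"
  shows "\<mu> \<le> L"
proof -
  obtain e :: 'a where "e \<in> Basis" using nonempty_Basis by blast
  then have e: "(norm e)\<^sup>2 > 0" by (simp add: nonzero_Basis)
  have "\<mu> * (norm e)\<^sup>2 \<le> inner (G (xs + e)) e" using qsm[of "xs + e"] by simp
  also have "\<dots> \<le> norm (G (xs + e) - G xs) * norm e" using root norm_cauchy_schwarz by simp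
  also have "\<dots> \<le> L * norm e * norm e"
    using lipschitz_onD[OF lip, of "xs + e" xs] by (simp add: dist_norm mult_right_mono)
  finally have "\<mu> * (norm e)\<^sup>2 \<le> L * (norm e)\<^sup>2" by (simp add: power2_eq_square mult.assoc)
  with e show ?thesis by simp
qed

lemma past_extragradient_identity:
  fixes x xs g y :: "'a::real_inner"
  assumes xh: "xh = x - \<omega> *\<^sub>R g"
  shows "(norm (x - xs - \<omega> *\<^sub>R y))\<^sup>2 + (norm (x - xh - \<omega> *\<^sub>R y))\<^sup>2
    = (norm (x - xs))\<^sup>2 - 2 * \<omega> * inner y (xh - xs) + 2 * \<omega>\<^sup>2 * (norm (g - y))\<^sup>2 - (norm (\<omega> *\<^sub>R g))\<^sup>2"
proof -
  have "x - xs - \<omega> *\<^sub>R y = (xh - xs) + \<omega> *\<^sub>R (g - y)" and "x - xh - \<omega> *\<^sub>R y = \<omega> *\<^sub>R (g - y)"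
    and "x - xs = (xh - xs) + \<omega> *\<^sub>R g"
    using xh by (simp_all add: algebra_simps)
  then show ?thesis
    unfolding power2_norm_eq_inner
    by (simp add: inner_add_left inner_add_right inner_diff_left inner_diff_right inner_commute
        algebra_simps power2_eq_square)
qed

lemma extrapolation_lipschitz_le:
  fixes x xprev g xh :: "'a::real_normed_vector" and G :: "'a \<Rightarrow> 'a"
  assumes xh: "xh = x - \<omega> *\<^sub>R g"
    and lip: "norm (G xh - G xprev) \<le> L * norm (xh - xprev)"
    and \<omega>: "0 \<le> \<omega>" and L: "0 \<le> L" "\<omega> * L \<le> 1/4"
  shows "\<omega>\<^sup>2 * (norm (g - G xh))\<^sup>2
    \<le> ((norm (x - xprev))\<^sup>2 + (norm (\<omega> *\<^sub>R g))\<^sup>2) / 4 + 2 * (\<omega>\<^sup>2 * (norm (g - G xprev))\<^sup>2)"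
proof -
  define Q H N where "Q = (norm (x - xprev))\<^sup>2" and "H = (norm (\<omega> *\<^sub>R g))\<^sup>2"
    and "N = (norm (g - G xprev))\<^sup>2"
  have "(norm (g - G xh))\<^sup>2 \<le> 2 * (norm (G xh - G xprev))\<^sup>2 + 2 * N"
    using power2_norm_add_le[of "G xprev - G xh" "g - G xprev"] unfolding N_def
    by (simp add: norm_minus_commute)
  moreover have "(norm (G xh - G xprev))\<^sup>2 \<le> L\<^sup>2 * (norm (xh - xprev))\<^sup>2"
    using lip by (simp add: power_mono flip: power_mult_distrib)
  moreover have "(norm (xh - xprev))\<^sup>2 \<le> 2 * Q + 2 * H"
    using power2_norm_add_le[of "x - xprev" "- (\<omega> *\<^sub>R g)"] unfolding Q_def H_def xh
    by (simp add: algebra_simps)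
  then have "L\<^sup>2 * (norm (xh - xprev))\<^sup>2 \<le> L\<^sup>2 * (2 * Q + 2 * H)" by (rule mult_left_mono) simp
  ultimately have "(norm (g - G xh))\<^sup>2 \<le> 4 * L\<^sup>2 * (Q + H) + 2 * N" by (simp add: algebra_simps)
  from mult_left_mono[OF this, of "\<omega>\<^sup>2"]
  have "\<omega>\<^sup>2 * (norm (g - G xh))\<^sup>2 \<le> 4 * (\<omega> * L)\<^sup>2 * (Q + H) + 2 * (\<omega>\<^sup>2 * N)"
    by (simp add: algebra_simps power_mult_distrib)
  also have "4 * (\<omega> * L)\<^sup>2 * (Q + H) \<le> (Q + H) / 4"
  proof -
    have "(\<omega> * L)\<^sup>2 \<le> (1/4)\<^sup>2" using \<omega> L by (intro power_mono) auto
    moreover have "0 \<le> Q + H" unfolding Q_def H_def by simp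
    ultimately show ?thesis
      using mult_right_mono[of "4 * (\<omega> * L)\<^sup>2" "1/4" "Q + H"] by (simp add: power_divide)
  qed
  finally show ?thesis unfolding Q_def H_def N_def by simp
qed

lemma past_extragradient_step_le:
  fixes x xs xprev g xh :: "'a::real_inner" and G :: "'a \<Rightarrow> 'a"
  assumes xh: "xh = x - \<omega> *\<^sub>R g"
    and qsm: "\<mu> * (norm (xh - xs))\<^sup>2 \<le> inner (G xh) (xh - xs)"
    and lip: "norm (G xh - G xprev) \<le> L * norm (xh - xprev)"
    and \<omega>: "0 \<le> \<omega>" and L: "0 \<le> L" "\<omega> * L \<le> 1/4"
    and \<delta>: "0 \<le> \<delta>" "\<omega> * \<delta> \<le> \<mu>" and \<mu>: "\<omega> * \<mu> \<le> 1/4"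
  shows "(norm (x - xs - \<omega> *\<^sub>R G xh))\<^sup>2 + (norm (x - xh - \<omega> *\<^sub>R G xh))\<^sup>2
           + 2 * \<omega>\<^sup>2 * \<delta> * (norm (xh - xs))\<^sup>2
         \<le> (1 - \<omega> * \<mu> + \<omega>\<^sup>2 * \<delta>) * (norm (x - xs))\<^sup>2 + (norm (x - xprev))\<^sup>2 / 2
           + 4 * \<omega>\<^sup>2 * (norm (g - G xprev))\<^sup>2"
proof -
  define P Q Z H where "P = (norm (x - xs))\<^sup>2" and "Q = (norm (x - xprev))\<^sup>2"
    and "Z = (norm (xh - xs))\<^sup>2" and "H = (norm (\<omega> *\<^sub>R g))\<^sup>2"
  define T W N where "T = inner (G xh) (xh - xs)" and "W = (norm (g - G xh))\<^sup>2"
    and "N = (norm (g - G xprev))\<^sup>2"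
  define c where "c = \<omega> * \<mu> - \<omega>\<^sup>2 * \<delta>"
  have W: "\<omega>\<^sup>2 * W \<le> (Q + H) / 4 + 2 * (\<omega>\<^sup>2 * N)"
    using extrapolation_lipschitz_le[OF xh lip \<omega> L] unfolding Q_def H_def W_def N_def .
  have T: "\<omega> * (\<mu> * Z) \<le> \<omega> * T"
    using qsm \<omega> unfolding T_def Z_def by (rule mult_left_mono)
  have "\<omega>\<^sup>2 * \<delta> \<le> \<omega> * \<mu>"
    using mult_left_mono[OF \<delta>(2) \<omega>] by (simp add: power2_eq_square mult.assoc)
  moreover have "0 \<le> \<omega>\<^sup>2 * \<delta>" using \<delta>(1) by simp
  ultimately have c: "0 \<le> c" "c \<le> 1/4" using \<mu> unfolding c_def by linarith+
  have "P \<le> 2 * Z + 2 * H"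
    using power2_norm_add_le[of "xh - xs" "\<omega> *\<^sub>R g"] unfolding P_def Z_def H_def xh by simp
  from mult_left_mono[OF this c(1)] have P: "c * P \<le> 2 * (c * Z) + 2 * (c * H)"
    by (simp add: algebra_simps)
  have cH: "c * H \<le> H / 4" using mult_right_mono[OF c(2), of H] unfolding H_def by simp
  have "(norm (x - xs - \<omega> *\<^sub>R G xh))\<^sup>2 + (norm (x - xh - \<omega> *\<^sub>R G xh))\<^sup>2
          + 2 * \<omega>\<^sup>2 * \<delta> * (norm (xh - xs))\<^sup>2
        = P - 2 * (\<omega> * T) + 2 * (\<omega>\<^sup>2 * W) - H + 2 * \<omega>\<^sup>2 * \<delta> * Z"
    using past_extragradient_identity[OF xh, of xs "G xh"] unfolding P_def T_def W_def H_def Z_def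
    by simp
  also have "\<dots> \<le> P - 2 * (\<omega> * (\<mu> * Z)) + (Q + H) / 2 + 4 * (\<omega>\<^sup>2 * N) - H + 2 * \<omega>\<^sup>2 * \<delta> * Z"
    using T W by linarith
  also have "\<dots> = P - 2 * (c * Z) + Q / 2 - H / 2 + 4 * \<omega>\<^sup>2 * N"
    unfolding c_def by (simp add: algebra_simps)
  also have "\<dots> \<le> P - c * P + Q / 2 + 4 * \<omega>\<^sup>2 * N"
    using P cH by linarith
  also have "\<dots> = (1 - \<omega> * \<mu> + \<omega>\<^sup>2 * \<delta>) * (norm (x - xs))\<^sup>2 + (norm (x - xprev))\<^sup>2 / 2
      + 4 * \<omega>\<^sup>2 * (norm (g - G xprev))\<^sup>2"
    unfolding c_def P_def Q_def N_def by (simp add: algebra_simps)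
  finally show ?thesis .
qed

lemma speg_recursion_coefficients_le:
  fixes \<omega> \<mu> \<delta> s2 P Q :: real
  assumes "0 \<le> \<omega>" "0 \<le> \<delta>" "18 * \<omega> * \<delta> \<le> \<mu>" "\<omega> * \<mu> \<le> 1/4" and "0 \<le> P" "0 \<le> Q"
  shows "(1 - \<omega> * \<mu> + \<omega>\<^sup>2 * \<delta>) * P + Q / 2 + 4 * \<omega>\<^sup>2 * s2 + 4 * \<omega>\<^sup>2 * (2 * \<delta> * (P + Q) + 2 * s2)
    \<le> (1 - \<omega> * \<mu> / 2) * (P + Q) + 12 * \<omega>\<^sup>2 * s2"
proof -
  have "\<omega>\<^sup>2 * \<delta> \<le> \<omega> * \<mu> / 18"
    using mult_left_mono[OF assms(3) assms(1)] by (simp add: power2_eq_square algebra_simps)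
  then have "1 - \<omega> * \<mu> + 9 * (\<omega>\<^sup>2 * \<delta>) \<le> 1 - \<omega> * \<mu> / 2" "1/2 + 8 * (\<omega>\<^sup>2 * \<delta>) \<le> 1 - \<omega> * \<mu> / 2"
    using assms(4) by linarith+
  from mult_right_mono[OF this(1) assms(5)] mult_right_mono[OF this(2) assms(6)]
  have "(1 - \<omega> * \<mu> + 9 * (\<omega>\<^sup>2 * \<delta>)) * P + (1/2 + 8 * (\<omega>\<^sup>2 * \<delta>)) * Q + 12 * \<omega>\<^sup>2 * s2
      \<le> (1 - \<omega> * \<mu> / 2) * P + (1 - \<omega> * \<mu> / 2) * Q + 12 * \<omega>\<^sup>2 * s2"
    by linarith
  moreover have "(1 - \<omega> * \<mu> + \<omega>\<^sup>2 * \<delta>) * P + Q / 2 + 4 * \<omega>\<^sup>2 * s2 + 4 * \<omega>\<^sup>2 * (2 * \<delta> * (P + Q) + 2 * s2)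
      = (1 - \<omega> * \<mu> + 9 * (\<omega>\<^sup>2 * \<delta>)) * P + (1/2 + 8 * (\<omega>\<^sup>2 * \<delta>)) * Q + 12 * \<omega>\<^sup>2 * s2"
    by (simp add: algebra_simps)
  ultimately show ?thesis by (simp add: distrib_left)
qed

lemma speg_step_size_conditions:
  fixes \<mu> \<delta> L \<omega> :: real
  assumes "0 < \<mu>" "\<mu> \<le> L" "0 \<le> \<delta>" and \<omega>: "0 < \<omega>" "\<omega> \<le> min (\<mu> / (18 * \<delta>)) (1 / (4 * L))"
  shows "\<omega> * L \<le> 1/4" and "18 * \<omega> * \<delta> \<le> \<mu>" and "\<omega> * \<mu> \<le> 1/4"
proof -
  show wL: "\<omega> * L \<le> 1/4" using assms by (simp add: field_simps)
  show "18 * \<omega> * \<delta> \<le> \<mu>" using assms by (cases "\<delta> = 0") (auto simp: field_simps)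
  have "\<omega> * \<mu> \<le> \<omega> * L" using assms by simp
  with wL show "\<omega> * \<mu> \<le> 1/4" by linarith
qed

lemma speg_step_size_choice:
  fixes \<mu> \<delta> L s2 \<epsilon> \<omega> :: real
  assumes \<mu>: "0 < \<mu>" and \<delta>: "0 < \<delta>" and L: "0 < L" and s2: "0 \<le> s2" and \<epsilon>: "0 < \<epsilon>"
    and \<omega>: "\<omega> = (if s2 = 0 then min (\<mu> / (18 * \<delta>)) (1 / (4 * L))
             else min (min (\<mu> / (18 * \<delta>)) (1 / (4 * L))) (\<epsilon> * \<mu> / (48 * s2)))"
  shows "0 < \<omega>" and "\<omega> \<le> min (\<mu> / (18 * \<delta>)) (1 / (4 * L))" and "24 * \<omega> * s2 / \<mu> \<le> \<epsilon> / 2"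
    and "1 / (\<omega> * \<mu> / 2) \<le> max (max (8 * L / \<mu>) (36 * \<delta> / \<mu>\<^sup>2)) (96 * s2 / (\<epsilon> * \<mu>\<^sup>2))"
proof -
  have cases: "\<omega> = \<mu> / (18 * \<delta>) \<or> \<omega> = 1 / (4 * L) \<or> (s2 \<noteq> 0 \<and> \<omega> = \<epsilon> * \<mu> / (48 * s2))"
    using \<omega> by (auto simp: min_def)
  then show "0 < \<omega>" using \<mu> \<delta> L s2 \<epsilon> by auto
  show "\<omega> \<le> min (\<mu> / (18 * \<delta>)) (1 / (4 * L))" using \<omega> by auto
  show "24 * \<omega> * s2 / \<mu> \<le> \<epsilon> / 2"
  proof (cases "s2 = 0")
    case False
    then have "\<omega> \<le> \<epsilon> * \<mu> / (48 * s2)" using \<omega> by auto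
    with False s2 \<mu> show ?thesis by (simp add: field_simps)
  qed (use \<epsilon> in simp)
  from cases have "1 / (\<omega> * \<mu> / 2) \<in> {8 * L / \<mu>, 36 * \<delta> / \<mu>\<^sup>2, 96 * s2 / (\<epsilon> * \<mu>\<^sup>2)}"
    using \<mu> \<delta> L \<epsilon> by (elim disjE conjE; hypsubst; simp add: field_simps power2_eq_square)
  then show "1 / (\<omega> * \<mu> / 2) \<le> max (max (8 * L / \<mu>) (36 * \<delta> / \<mu>\<^sup>2)) (96 * s2 / (\<epsilon> * \<mu>\<^sup>2))"
    by auto
qed

section \<open>Integrals over products of i.i.d. samples\<close>

lemma nn_integral_ennreal_lincomb:
  assumes f: "f \<in> borel_measurable M" "\<And>x. 0 \<le> f x" and g: "g \<in> borel_measurable M" "\<And>x. 0 \<le> g x"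
    and "0 \<le> a" "0 \<le> b"
  shows "(\<integral>\<^sup>+ x. ennreal (a * f x + b * g x) \<partial>M)
    = ennreal a * (\<integral>\<^sup>+ x. ennreal (f x) \<partial>M) + ennreal b * (\<integral>\<^sup>+ x. ennreal (g x) \<partial>M)"
proof -
  have "(\<integral>\<^sup>+ x. ennreal (a * f x + b * g x) \<partial>M)
      = (\<integral>\<^sup>+ x. ennreal a * ennreal (f x) + ennreal b * ennreal (g x) \<partial>M)"
    using assms by (intro nn_integral_cong) (simp add: ennreal_plus ennreal_mult)
  also have "\<dots> = ennreal a * (\<integral>\<^sup>+ x. ennreal (f x) \<partial>M) + ennreal b * (\<integral>\<^sup>+ x. ennreal (g x) \<partial>M)"
    using f g by (simp add: nn_integral_add nn_integral_cmult)
  finally show ?thesis .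
qed

lemma nn_integral_PiM_fresh_component:
  fixes f :: "('i \<Rightarrow> 'b) \<Rightarrow> 'b \<Rightarrow> ennreal"
  assumes D: "prob_space D"
    and f: "(\<lambda>(w, v). f w v) \<in> borel_measurable (PiM UNIV (\<lambda>_. D) \<Otimes>\<^sub>M D)"
    and fresh: "\<And>w y. f (w(m := y)) = f w"
  shows "(\<integral>\<^sup>+ w. f w (w m) \<partial>PiM UNIV (\<lambda>_. D)) = (\<integral>\<^sup>+ w. (\<integral>\<^sup>+ v. f w v \<partial>D) \<partial>PiM UNIV (\<lambda>_. D))"
proof -
  interpret D: prob_space D by (rule D)
  define P where "P = PiM (UNIV :: 'i set) (\<lambda>_. D)"
  define P' where "P' = PiM (UNIV - {m} :: 'i set) (\<lambda>_. D)"
  interpret P': prob_space P' unfolding P'_def by (intro prob_space_PiM D)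
  interpret DP': pair_sigma_finite D P' by unfold_locales
  have ins: "insert m (UNIV - {m}) = UNIV" by auto
  \<comment> \<open>The product is the image of \<open>D \<Otimes> P'\<close> under inserting the coordinate \<open>m\<close>; after this change
    of variables both integrands depend on the remaining coordinates only through \<open>X(m := undefined)\<close>.\<close>
  have ins_meas: "(\<lambda>(x, X). X(m := x)) \<in> measurable (D \<Otimes>\<^sub>M P') P"
    using measurable_PiM_component_rev[of "UNIV - {m}"]
    unfolding P_def P'_def by (subst ins[symmetric]) measurable
  have reindex: "(\<integral>\<^sup>+ w. h w \<partial>P) = (\<integral>\<^sup>+ X. \<integral>\<^sup>+ x. h (X(m := x)) \<partial>D \<partial>P')"
    if h: "h \<in> borel_measurable P" for h
  proof -
    have "(\<integral>\<^sup>+ w. h w \<partial>P) = (\<integral>\<^sup>+ w. h w \<partial>distr (D \<Otimes>\<^sub>M P') P (\<lambda>(x, X). X(m := x)))"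
      using distr_pair_PiM_eq_PiM[of "UNIV - {m}" "\<lambda>_. D" m] D unfolding P_def P'_def ins by simp
    also have "\<dots> = (\<integral>\<^sup>+ p. h ((snd p)(m := fst p)) \<partial>(D \<Otimes>\<^sub>M P'))"
      using ins_meas h by (simp add: nn_integral_distr case_prod_beta)
    also have "\<dots> = (\<integral>\<^sup>+ X. \<integral>\<^sup>+ x. h (X(m := x)) \<partial>D \<partial>P')"
      using DP'.nn_integral_snd[OF measurable_compose[OF ins_meas h]] by (simp add: case_prod_beta)
    finally show ?thesis .
  qed
  have "(\<lambda>w. f w (w m)) \<in> borel_measurable P"
    using measurable_compose[OF measurable_Pair[OF measurable_ident_sets[OF refl]
          measurable_component_singleton[of m UNIV]] f] unfolding P_def by simp
  then have "(\<integral>\<^sup>+ w. f w (w m) \<partial>P) = (\<integral>\<^sup>+ X. \<integral>\<^sup>+ x. f (X(m := undefined)) x \<partial>D \<partial>P')"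
    by (simp add: reindex fresh)
  also have "\<dots> = (\<integral>\<^sup>+ X. \<integral>\<^sup>+ x. (\<integral>\<^sup>+ v. f (X(m := x)) v \<partial>D) \<partial>D \<partial>P')"
    by (simp add: fresh D.emeasure_space_1)
  also have "\<dots> = (\<integral>\<^sup>+ w. (\<integral>\<^sup>+ v. f w v \<partial>D) \<partial>P)"
    using D.borel_measurable_nn_integral[OF f] unfolding P_def[symmetric] by (simp add: reindex)
  finally show ?thesis unfolding P_def .
qed

lemma (in prob_space) nn_integral_norm_sq_bias_variance:
  fixes g :: "'a \<Rightarrow> 'b::{real_inner, banach, second_countable_topology}"
  assumes g: "has_bochner_integral M g c"
    and var: "(\<integral>\<^sup>+ x. ennreal ((norm (g x - c))\<^sup>2) \<partial>M) < \<infinity>"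
  shows "(\<integral>\<^sup>+ x. ennreal ((norm (u - w *\<^sub>R g x))\<^sup>2) \<partial>M)
    = ennreal ((norm (u - w *\<^sub>R c))\<^sup>2) + ennreal (w\<^sup>2) * (\<integral>\<^sup>+ x. ennreal ((norm (g x - c))\<^sup>2) \<partial>M)"
proof -
  define d where "d = u - w *\<^sub>R c"
  have [measurable]: "g \<in> borel_measurable M" using g by (rule borel_measurable_has_bochner_integral)
  obtain V where V: "(\<integral>\<^sup>+ x. ennreal ((norm (g x - c))\<^sup>2) \<partial>M) = ennreal V" "0 \<le> V"
    using var by (cases "(\<integral>\<^sup>+ x. ennreal ((norm (g x - c))\<^sup>2) \<partial>M)") auto
  have "integrable M (\<lambda>x. (norm (g x - c))\<^sup>2)"
    by (rule integrableI_nn_integral_finite[OF _ _ V(1)]) auto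
  then have "has_bochner_integral M (\<lambda>x. (norm (g x - c))\<^sup>2) V"
    using V nn_integral_eq_integral[of M "\<lambda>x. (norm (g x - c))\<^sup>2"]
    by (simp add: has_bochner_integral_iff)
  moreover have "has_bochner_integral M (\<lambda>x. inner d (g x - c)) 0"
  proof -
    have "has_bochner_integral M (\<lambda>_. c) c" by (simp add: has_bochner_integral_iff prob_space)
    then show ?thesis using has_bochner_integral_inner_right[OF has_bochner_integral_diff[OF g]] by fastforce
  qed
  ultimately have "has_bochner_integral M
      (\<lambda>x. (norm d)\<^sup>2 + w\<^sup>2 * (norm (g x - c))\<^sup>2 - 2 * w * inner d (g x - c))
      ((norm d)\<^sup>2 + w\<^sup>2 * V - 2 * w * 0)"
    by (intro has_bochner_integral_add has_bochner_integral_diff has_bochner_integral_mult_right)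
      (auto simp: has_bochner_integral_iff prob_space)
  moreover have "(norm (u - w *\<^sub>R g x))\<^sup>2 = (norm d)\<^sup>2 + w\<^sup>2 * (norm (g x - c))\<^sup>2 - 2 * w * inner d (g x - c)" for x
  proof -
    have "u - w *\<^sub>R g x = d - w *\<^sub>R (g x - c)" unfolding d_def by (simp add: algebra_simps)
    then show ?thesis by (simp add: power2_norm_diff_scaleR)
  qed
  ultimately have "has_bochner_integral M (\<lambda>x. (norm (u - w *\<^sub>R g x))\<^sup>2) ((norm d)\<^sup>2 + w\<^sup>2 * V)"
    by simp
  then have "(\<integral>\<^sup>+ x. ennreal ((norm (u - w *\<^sub>R g x))\<^sup>2) \<partial>M) = ennreal ((norm d)\<^sup>2 + w\<^sup>2 * V)"
    by (simp add: has_bochner_integral_iff nn_integral_eq_integral)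
  then show ?thesis using V unfolding d_def by (simp add: ennreal_plus ennreal_mult)
qed

section \<open>Convergence of SPEG\<close>

lemma speg_state_fun_upd_future:
  "k < m \<Longrightarrow> speg_state n F gam om x0 (w(m := y)) k = speg_state n F gam om x0 w k"
  by (induction k) (auto simp: Let_def)

lemma snd_speg_state_fun_upd:
  "snd (speg_state n F gam om x0 (w(k := y)) k) = snd (speg_state n F gam om x0 w k)"
  by (cases k) (auto simp: Let_def speg_state_fun_upd_future)

context
  fixes n :: nat and F :: "nat \<Rightarrow> 'a::euclidean_space \<Rightarrow> 'a" and D :: "(nat \<Rightarrow> real) measure"
  assumes F_meas: "\<And>i. i < n \<Longrightarrow> F i \<in> borel_measurable borel"
    and D: "sampling_distribution n D"
begin

lemma prob_space_sampling: "prob_space D"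
  using D unfolding sampling_distribution_def by blast

lemma prob_space_iid_samples: "prob_space (iid_samples D)"
  unfolding iid_samples_def by (intro prob_space_PiM prob_space_sampling)

lemma measurable_Fsamp:
  assumes v: "v \<in> measurable M D" and x: "x \<in> borel_measurable M"
  shows "(\<lambda>w. Fsamp n F (v w) (x w)) \<in> borel_measurable M"
proof -
  have "(\<lambda>w. v w i) \<in> borel_measurable M" if "i < n" for i
  proof -
    have "(\<lambda>u. u i) \<in> borel_measurable D"
      using D that unfolding sampling_distribution_def by (simp cong: measurable_cong_sets)
    then show ?thesis using measurable_compose[OF v] by blast
  qed
  then show ?thesis unfolding Fsamp_def
    using measurable_compose[OF x F_meas] by (intro borel_measurable_scaleR borel_measurable_sum) auto
qed

lemma borel_measurable_Fmean: "Fmean n F \<in> borel_measurable borel"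
  unfolding Fmean_def[abs_def] using F_meas by (intro borel_measurable_scaleR borel_measurable_sum) auto

lemma has_bochner_integral_Fsamp: "has_bochner_integral D (\<lambda>v. Fsamp n F v x) (Fmean n F x)"
proof -
  have "has_bochner_integral D (\<lambda>v. v i) 1" if "i < n" for i
    using D that unfolding sampling_distribution_def by (simp add: has_bochner_integral_iff)
  then have "has_bochner_integral D (\<lambda>v. \<Sum>i<n. v i *\<^sub>R F i x) (\<Sum>i<n. 1 *\<^sub>R F i x)"
    by (intro has_bochner_integral_sum has_bochner_integral_scaleR_left) auto
  then show ?thesis unfolding Fsamp_def Fmean_def by (intro has_bochner_integral_scaleR_right) simp
qed

lemma measurable_speg_state:
  "(\<lambda>w. fst (speg_state n F gam om x0 w k)) \<in> borel_measurable (iid_samples D) \<and>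
   (\<lambda>w. snd (speg_state n F gam om x0 w k)) \<in> borel_measurable (iid_samples D)"
proof (induction k)
  case (Suc k)
  have sample: "(\<lambda>w. w j) \<in> measurable (iid_samples D) D" for j
    unfolding iid_samples_def by (rule measurable_component_singleton) simp
  let ?xh = "\<lambda>w. fst (speg_state n F gam om x0 w k)
    - gam k *\<^sub>R Fsamp n F (w k) (snd (speg_state n F gam om x0 w k))"
  have "(\<lambda>w. Fsamp n F (w k) (snd (speg_state n F gam om x0 w k))) \<in> borel_measurable (iid_samples D)"
    using Suc by (intro measurable_Fsamp[OF sample]) blast
  then have xh: "?xh \<in> borel_measurable (iid_samples D)"
    using Suc by (intro borel_measurable_diff borel_measurable_scaleR) auto
  then have "(\<lambda>w. Fsamp n F (w (Suc k)) (?xh w)) \<in> borel_measurable (iid_samples D)"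
    by (rule measurable_Fsamp[OF sample])
  then have "(\<lambda>w. fst (speg_state n F gam om x0 w k) - om k *\<^sub>R Fsamp n F (w (Suc k)) (?xh w))
      \<in> borel_measurable (iid_samples D)"
    using Suc by (intro borel_measurable_diff borel_measurable_scaleR) auto
  with xh show ?case by (simp_all add: Let_def)
qed simp_all

lemma Rsq_0: "Rsq n F D \<omega> x0 xs 0 = ennreal ((norm (x0 - xs))\<^sup>2)"
  using prob_space.emeasure_space_1[OF prob_space_iid_samples] by (simp add: Rsq_def)

context
  fixes xs :: 'a and \<delta> s2 :: real
  assumes root: "Fmean n F xs = 0"
    and ER: "\<And>x. (\<integral>\<^sup>+ v. ennreal ((norm ((Fsamp n F v x - Fsamp n F v xs)
                         - (Fmean n F x - Fmean n F xs)))^2) \<partial>D)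
                  \<le> ennreal (\<delta> / 2 * (norm (x - xs))^2)"
    and sigma: "(\<integral>\<^sup>+ v. ennreal ((norm (Fsamp n F v xs))^2) \<partial>D) = ennreal s2"
    and \<delta>: "0 \<le> \<delta>" and s2: "0 \<le> s2"
begin

lemma nn_integral_Fsamp_variance_le:
  "(\<integral>\<^sup>+ v. ennreal ((norm (Fsamp n F v x - Fmean n F x))\<^sup>2) \<partial>D)
     \<le> ennreal (\<delta> * (norm (x - xs))\<^sup>2 + 2 * s2)"
proof -
  let ?e = "\<lambda>v. (Fsamp n F v x - Fsamp n F v xs) - (Fmean n F x - Fmean n F xs)"
  have [measurable]: "(\<lambda>v. Fsamp n F v y) \<in> borel_measurable D" for y
    using measurable_Fsamp[of "\<lambda>v. v" D "\<lambda>_. y"] by simp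
  have "(\<integral>\<^sup>+ v. ennreal ((norm (Fsamp n F v x - Fmean n F x))\<^sup>2) \<partial>D)
      \<le> (\<integral>\<^sup>+ v. ennreal (2 * (norm (?e v))\<^sup>2 + 2 * (norm (Fsamp n F v xs))\<^sup>2) \<partial>D)"
  proof (intro nn_integral_mono ennreal_leI)
    fix v
    show "(norm (Fsamp n F v x - Fmean n F x))\<^sup>2 \<le> 2 * (norm (?e v))\<^sup>2 + 2 * (norm (Fsamp n F v xs))\<^sup>2"
      using power2_norm_add_le[of "?e v" "Fsamp n F v xs"] root by simp
  qed
  also have "\<dots> = ennreal 2 * (\<integral>\<^sup>+ v. ennreal ((norm (?e v))\<^sup>2) \<partial>D)
      + ennreal 2 * (\<integral>\<^sup>+ v. ennreal ((norm (Fsamp n F v xs))\<^sup>2) \<partial>D)"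
    by (rule nn_integral_ennreal_lincomb) auto
  also have "\<dots> \<le> ennreal 2 * ennreal (\<delta> / 2 * (norm (x - xs))\<^sup>2) + ennreal 2 * ennreal s2"
    using ER[of x] sigma by (intro add_mono mult_left_mono) auto
  also have "\<dots> = ennreal (\<delta> * (norm (x - xs))\<^sup>2 + 2 * s2)"
    using \<delta> s2 by (simp add: numeral_mult_ennreal ennreal_plus[symmetric] del: ennreal_plus)
  finally show ?thesis .
qed

lemma nn_integral_Fsamp_step_le:
  "(\<integral>\<^sup>+ v. ennreal ((norm (u - \<omega> *\<^sub>R Fsamp n F v x))\<^sup>2) \<partial>D)
     \<le> ennreal ((norm (u - \<omega> *\<^sub>R Fmean n F x))\<^sup>2 + \<omega>\<^sup>2 * (\<delta> * (norm (x - xs))\<^sup>2 + 2 * s2))"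
proof -
  interpret D: prob_space D by (rule prob_space_sampling)
  have "(\<integral>\<^sup>+ v. ennreal ((norm (u - \<omega> *\<^sub>R Fsamp n F v x))\<^sup>2) \<partial>D)
      = ennreal ((norm (u - \<omega> *\<^sub>R Fmean n F x))\<^sup>2)
        + ennreal (\<omega>\<^sup>2) * (\<integral>\<^sup>+ v. ennreal ((norm (Fsamp n F v x - Fmean n F x))\<^sup>2) \<partial>D)"
    using nn_integral_Fsamp_variance_le[of x]
    by (intro D.nn_integral_norm_sq_bias_variance has_bochner_integral_Fsamp)
      (auto simp: top_unique intro: le_less_trans)
  also have "\<dots> \<le> ennreal ((norm (u - \<omega> *\<^sub>R Fmean n F x))\<^sup>2)
        + ennreal (\<omega>\<^sup>2) * ennreal (\<delta> * (norm (x - xs))\<^sup>2 + 2 * s2)"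
    using nn_integral_Fsamp_variance_le by (intro add_left_mono mult_left_mono) auto
  also have "\<dots> = ennreal ((norm (u - \<omega> *\<^sub>R Fmean n F x))\<^sup>2 + \<omega>\<^sup>2 * (\<delta> * (norm (x - xs))\<^sup>2 + 2 * s2))"
    using \<delta> s2 by (simp add: ennreal_mult[symmetric] ennreal_plus[symmetric] del: ennreal_plus)
  finally show ?thesis .
qed

lemma nn_integral_extrapolation_error_le:
  fixes gam om :: "nat \<Rightarrow> real" and x0 :: 'a and k :: nat
  defines "S w \<equiv> speg_state n F gam om x0 w k"
  shows "(\<integral>\<^sup>+ w. ennreal ((norm (Fsamp n F (w k) (snd (S w)) - Fmean n F (snd (S w))))\<^sup>2) \<partial>iid_samples D)
    \<le> (\<integral>\<^sup>+ w. ennreal (2 * \<delta> * ((norm (fst (S w) - xs))\<^sup>2 + (norm (fst (S w) - snd (S w)))\<^sup>2) + 2 * s2)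
          \<partial>iid_samples D)"
proof -
  define f where "f w v = ennreal ((norm (Fsamp n F v (snd (S w)) - Fmean n F (snd (S w))))\<^sup>2)" for w v
  have xp: "(\<lambda>w. snd (S w)) \<in> borel_measurable (iid_samples D)"
    using measurable_speg_state unfolding S_def by blast
  have "(\<lambda>p. Fsamp n F (snd p) (snd (S (fst p)))) \<in> borel_measurable (iid_samples D \<Otimes>\<^sub>M D)"
    using measurable_compose[OF measurable_fst xp] by (intro measurable_Fsamp measurable_snd)
  then have f: "(\<lambda>(w, v). f w v) \<in> borel_measurable (iid_samples D \<Otimes>\<^sub>M D)"
    unfolding f_def case_prod_beta
    using measurable_compose[OF measurable_fst xp] borel_measurable_Fmean by measurable
  have "(\<integral>\<^sup>+ w. f w (w k) \<partial>iid_samples D) = (\<integral>\<^sup>+ w. (\<integral>\<^sup>+ v. f w v \<partial>D) \<partial>iid_samples D)"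
    using f unfolding iid_samples_def
    by (intro nn_integral_PiM_fresh_component prob_space_sampling)
      (auto simp: f_def S_def snd_speg_state_fun_upd)
  also have "\<dots> \<le> (\<integral>\<^sup>+ w. ennreal (2 * \<delta> * ((norm (fst (S w) - xs))\<^sup>2 + (norm (fst (S w) - snd (S w)))\<^sup>2)
      + 2 * s2) \<partial>iid_samples D)"
  proof (rule nn_integral_mono)
    fix w
    have "(norm (snd (S w) - xs))\<^sup>2 \<le> 2 * (norm (fst (S w) - xs))\<^sup>2 + 2 * (norm (fst (S w) - snd (S w)))\<^sup>2"
      using power2_norm_add_le[of "fst (S w) - xs" "snd (S w) - fst (S w)"] by (simp add: norm_minus_commute)
    from mult_left_mono[OF this \<delta>]
    have "\<delta> * (norm (snd (S w) - xs))\<^sup>2 + 2 * s2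
        \<le> 2 * \<delta> * ((norm (fst (S w) - xs))\<^sup>2 + (norm (fst (S w) - snd (S w)))\<^sup>2) + 2 * s2"
      by (simp add: algebra_simps)
    with nn_integral_Fsamp_variance_le[of "snd (S w)"]
    show "(\<integral>\<^sup>+ v. f w v \<partial>D) \<le> ennreal (2 * \<delta> * ((norm (fst (S w) - xs))\<^sup>2
        + (norm (fst (S w) - snd (S w)))\<^sup>2) + 2 * s2)"
      unfolding f_def by (blast intro: order.trans ennreal_leI)
  qed
  finally show ?thesis unfolding f_def .
qed

context
  fixes L \<mu> :: real
  assumes lip: "L-lipschitz_on UNIV (Fmean n F)"
    and qsm: "\<And>x. inner (Fmean n F x) (x - xs) \<ge> \<mu> * (norm (x - xs))^2"
begin

lemma nn_integral_speg_step_le: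
  assumes xh: "xh = x - \<omega> *\<^sub>R g"
    and step: "0 \<le> \<omega>" "\<omega> * L \<le> 1/4" "\<omega> * \<delta> \<le> \<mu>" "\<omega> * \<mu> \<le> 1/4"
  shows "(\<integral>\<^sup>+ v. ennreal ((norm (x - \<omega> *\<^sub>R Fsamp n F v xh - xs))\<^sup>2
                       + (norm (x - \<omega> *\<^sub>R Fsamp n F v xh - xh))\<^sup>2) \<partial>D)
    \<le> ennreal ((1 - \<omega> * \<mu> + \<omega>\<^sup>2 * \<delta>) * (norm (x - xs))\<^sup>2 + (norm (x - xprev))\<^sup>2 / 2
                + 4 * \<omega>\<^sup>2 * s2 + 4 * \<omega>\<^sup>2 * (norm (g - Fmean n F xprev))\<^sup>2)"
proof -
  have [measurable]: "(\<lambda>v. Fsamp n F v xh) \<in> borel_measurable D"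
    using measurable_Fsamp[of "\<lambda>v. v" D "\<lambda>_. xh"] by simp
  have "(\<integral>\<^sup>+ v. ennreal ((norm (x - \<omega> *\<^sub>R Fsamp n F v xh - xs))\<^sup>2
                       + (norm (x - \<omega> *\<^sub>R Fsamp n F v xh - xh))\<^sup>2) \<partial>D)
      = (\<integral>\<^sup>+ v. ennreal (1 * (norm ((x - xs) - \<omega> *\<^sub>R Fsamp n F v xh))\<^sup>2
                       + 1 * (norm ((x - xh) - \<omega> *\<^sub>R Fsamp n F v xh))\<^sup>2) \<partial>D)"
    by (simp add: algebra_simps)
  also have "\<dots> = (\<integral>\<^sup>+ v. ennreal ((norm ((x - xs) - \<omega> *\<^sub>R Fsamp n F v xh))\<^sup>2) \<partial>D)
      + (\<integral>\<^sup>+ v. ennreal ((norm ((x - xh) - \<omega> *\<^sub>R Fsamp n F v xh))\<^sup>2) \<partial>D)"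
    by (subst nn_integral_ennreal_lincomb) auto
  also have "\<dots> \<le> ennreal ((norm (x - xs - \<omega> *\<^sub>R Fmean n F xh))\<^sup>2 + \<omega>\<^sup>2 * (\<delta> * (norm (xh - xs))\<^sup>2 + 2 * s2))
      + ennreal ((norm (x - xh - \<omega> *\<^sub>R Fmean n F xh))\<^sup>2 + \<omega>\<^sup>2 * (\<delta> * (norm (xh - xs))\<^sup>2 + 2 * s2))"
    by (intro add_mono nn_integral_Fsamp_step_le)
  also have "\<dots> = ennreal ((norm (x - xs - \<omega> *\<^sub>R Fmean n F xh))\<^sup>2 + (norm (x - xh - \<omega> *\<^sub>R Fmean n F xh))\<^sup>2
      + 2 * \<omega>\<^sup>2 * \<delta> * (norm (xh - xs))\<^sup>2 + 4 * \<omega>\<^sup>2 * s2)"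
    using \<delta> s2 by (subst ennreal_plus[symmetric]) (auto simp: algebra_simps)
  also have "\<dots> \<le> ennreal ((1 - \<omega> * \<mu> + \<omega>\<^sup>2 * \<delta>) * (norm (x - xs))\<^sup>2 + (norm (x - xprev))\<^sup>2 / 2
                + 4 * \<omega>\<^sup>2 * s2 + 4 * \<omega>\<^sup>2 * (norm (g - Fmean n F xprev))\<^sup>2)"
  proof (rule ennreal_leI)
    have "norm (Fmean n F xh - Fmean n F xprev) \<le> L * norm (xh - xprev)"
      using lipschitz_onD[OF lip] by (simp add: dist_norm)
    from past_extragradient_step_le[OF xh qsm this step(1) lipschitz_on_nonneg[OF lip] step(2) \<delta> step(3,4)]
    show "(norm (x - xs - \<omega> *\<^sub>R Fmean n F xh))\<^sup>2 + (norm (x - xh - \<omega> *\<^sub>R Fmean n F xh))\<^sup>2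
      + 2 * \<omega>\<^sup>2 * \<delta> * (norm (xh - xs))\<^sup>2 + 4 * \<omega>\<^sup>2 * s2
      \<le> (1 - \<omega> * \<mu> + \<omega>\<^sup>2 * \<delta>) * (norm (x - xs))\<^sup>2 + (norm (x - xprev))\<^sup>2 / 2
                + 4 * \<omega>\<^sup>2 * s2 + 4 * \<omega>\<^sup>2 * (norm (g - Fmean n F xprev))\<^sup>2"
      by linarith
  qed
  finally show ?thesis .
qed

lemma Rsq_Suc_le_conditional:
  fixes \<omega> :: real and x0 :: 'a and k :: nat
  defines "S w \<equiv> speg_state n F (\<lambda>_. \<omega>) (\<lambda>_. \<omega>) x0 w k"
  assumes step: "0 \<le> \<omega>" "\<omega> * L \<le> 1/4" "\<omega> * \<delta> \<le> \<mu>" "\<omega> * \<mu> \<le> 1/4"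
  shows "Rsq n F D \<omega> x0 xs (Suc k)
    \<le> (\<integral>\<^sup>+ w. ennreal ((1 - \<omega> * \<mu> + \<omega>\<^sup>2 * \<delta>) * (norm (fst (S w) - xs))\<^sup>2
          + (norm (fst (S w) - snd (S w)))\<^sup>2 / 2 + 4 * \<omega>\<^sup>2 * s2
          + 4 * \<omega>\<^sup>2 * (norm (Fsamp n F (w k) (snd (S w)) - Fmean n F (snd (S w))))\<^sup>2) \<partial>iid_samples D)"
proof -
  define M where "M = iid_samples D"
  define xh where "xh w = fst (S w) - \<omega> *\<^sub>R Fsamp n F (w k) (snd (S w))" for w
  define f where "f w v = ennreal ((norm (fst (S w) - \<omega> *\<^sub>R Fsamp n F v (xh w) - xs))\<^sup>2
    + (norm (fst (S w) - \<omega> *\<^sub>R Fsamp n F v (xh w) - xh w))\<^sup>2)" for w v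
  have [measurable]: "(\<lambda>w. fst (S w)) \<in> borel_measurable M" "(\<lambda>w. snd (S w)) \<in> borel_measurable M"
    using measurable_speg_state unfolding S_def M_def by blast+
  moreover have "(\<lambda>w. w k) \<in> measurable M D"
    unfolding M_def iid_samples_def by (rule measurable_component_singleton) simp
  ultimately have [measurable]: "xh \<in> borel_measurable M"
    unfolding xh_def using measurable_Fsamp by measurable
  have "(\<lambda>p. Fsamp n F (snd p) (xh (fst p))) \<in> borel_measurable (M \<Otimes>\<^sub>M D)"
    by (intro measurable_Fsamp measurable_snd) measurable
  then have f_meas: "(\<lambda>(w, v). f w v) \<in> borel_measurable (M \<Otimes>\<^sub>M D)"
    unfolding f_def case_prod_beta by measurable
  have "Rsq n F D \<omega> x0 xs (Suc k) = (\<integral>\<^sup>+ w. f w (w (Suc k)) \<partial>M)"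
    unfolding Rsq_def M_def f_def xh_def S_def by (simp add: Let_def)
  also have "\<dots> = (\<integral>\<^sup>+ w. (\<integral>\<^sup>+ v. f w v \<partial>D) \<partial>M)"
    using f_meas unfolding M_def iid_samples_def
    by (intro nn_integral_PiM_fresh_component prob_space_sampling)
      (auto simp: f_def xh_def S_def speg_state_fun_upd_future)
  also have "\<dots> \<le> (\<integral>\<^sup>+ w. ennreal ((1 - \<omega> * \<mu> + \<omega>\<^sup>2 * \<delta>) * (norm (fst (S w) - xs))\<^sup>2
          + (norm (fst (S w) - snd (S w)))\<^sup>2 / 2 + 4 * \<omega>\<^sup>2 * s2
          + 4 * \<omega>\<^sup>2 * (norm (Fsamp n F (w k) (snd (S w)) - Fmean n F (snd (S w))))\<^sup>2) \<partial>M)"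
    unfolding f_def by (intro nn_integral_mono nn_integral_speg_step_le[OF xh_def step])
  finally show ?thesis unfolding M_def .
qed

lemma Rsq_Suc_le:
  assumes step: "0 \<le> \<omega>" "\<omega> * L \<le> 1/4" "18 * \<omega> * \<delta> \<le> \<mu>" "\<omega> * \<mu> \<le> 1/4"
  shows "Rsq n F D \<omega> x0 xs (Suc k)
    \<le> ennreal (1 - \<omega> * \<mu> / 2) * Rsq n F D \<omega> x0 xs k + ennreal (12 * \<omega>\<^sup>2 * s2)"
proof -
  define M where "M = iid_samples D"
  interpret M: prob_space M unfolding M_def by (rule prob_space_iid_samples)
  define S where "S w = speg_state n F (\<lambda>_. \<omega>) (\<lambda>_. \<omega>) x0 w k" for w
  define P Q where "P w = (norm (fst (S w) - xs))\<^sup>2" and "Q w = (norm (fst (S w) - snd (S w)))\<^sup>2" for w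
  define A where "A w = (1 - \<omega> * \<mu> + \<omega>\<^sup>2 * \<delta>) * P w + Q w / 2 + 4 * \<omega>\<^sup>2 * s2" for w
  define N where "N w = (norm (Fsamp n F (w k) (snd (S w)) - Fmean n F (snd (S w))))\<^sup>2" for w
  have [measurable]: "(\<lambda>w. fst (S w)) \<in> borel_measurable M" "(\<lambda>w. snd (S w)) \<in> borel_measurable M"
    using measurable_speg_state unfolding S_def M_def by blast+
  moreover have "(\<lambda>w. w k) \<in> measurable M D"
    unfolding M_def iid_samples_def by (rule measurable_component_singleton) simp
  ultimately have [measurable]: "P \<in> borel_measurable M" "Q \<in> borel_measurable M"
    "A \<in> borel_measurable M" "N \<in> borel_measurable M"
    unfolding P_def Q_def A_def N_def using measurable_Fsamp borel_measurable_Fmean by measurable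
  have "0 \<le> \<omega> * \<delta>" using step(1) \<delta> by simp
  then have "\<omega> * \<delta> \<le> \<mu>" using step(3) by linarith
  have "0 \<le> \<omega>\<^sup>2 * \<delta>" using \<delta> by simp
  then have "0 \<le> 1 - \<omega> * \<mu> + \<omega>\<^sup>2 * \<delta>" using step(4) by linarith
  then have nonneg: "0 \<le> A w" "0 \<le> N w" "0 \<le> 2 * \<delta> * (P w + Q w) + 2 * s2" for w
    using \<delta> s2 unfolding A_def N_def P_def Q_def by simp_all
  have "Rsq n F D \<omega> x0 xs (Suc k) \<le> (\<integral>\<^sup>+ w. ennreal (1 * A w + 4 * \<omega>\<^sup>2 * N w) \<partial>M)"
    using Rsq_Suc_le_conditional[OF step(1,2) \<open>\<omega> * \<delta> \<le> \<mu>\<close> step(4)]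
    unfolding A_def N_def P_def Q_def S_def M_def by simp
  also have "\<dots> = (\<integral>\<^sup>+ w. ennreal (A w) \<partial>M) + ennreal (4 * \<omega>\<^sup>2) * (\<integral>\<^sup>+ w. ennreal (N w) \<partial>M)"
    using nonneg by (subst nn_integral_ennreal_lincomb) auto
  also have "\<dots> \<le> (\<integral>\<^sup>+ w. ennreal (A w) \<partial>M)
      + ennreal (4 * \<omega>\<^sup>2) * (\<integral>\<^sup>+ w. ennreal (2 * \<delta> * (P w + Q w) + 2 * s2) \<partial>M)"
    using nn_integral_extrapolation_error_le[of k "\<lambda>_. \<omega>" "\<lambda>_. \<omega>" x0]
    unfolding N_def P_def Q_def S_def M_def by (intro add_left_mono mult_left_mono) auto
  also have "\<dots> = (\<integral>\<^sup>+ w. ennreal (1 * A w + 4 * \<omega>\<^sup>2 * (2 * \<delta> * (P w + Q w) + 2 * s2)) \<partial>M)"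
    using nonneg by (subst nn_integral_ennreal_lincomb) auto
  also have "\<dots> \<le> (\<integral>\<^sup>+ w. ennreal ((1 - \<omega> * \<mu> / 2) * (P w + Q w) + 12 * \<omega>\<^sup>2 * s2 * 1) \<partial>M)"
    using speg_recursion_coefficients_le[OF step(1) \<delta> step(3,4)]
    unfolding A_def P_def Q_def by (intro nn_integral_mono ennreal_leI) simp
  also have "\<dots> = ennreal (1 - \<omega> * \<mu> / 2) * (\<integral>\<^sup>+ w. ennreal (P w + Q w) \<partial>M)
      + ennreal (12 * \<omega>\<^sup>2 * s2) * (\<integral>\<^sup>+ w. ennreal 1 \<partial>M)"
    using step(4) s2 unfolding P_def Q_def by (intro nn_integral_ennreal_lincomb) auto
  also have "\<dots> = ennreal (1 - \<omega> * \<mu> / 2) * Rsq n F D \<omega> x0 xs k + ennreal (12 * \<omega>\<^sup>2 * s2)"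
    using M.emeasure_space_1 by (simp add: Rsq_def M_def P_def Q_def S_def)
  finally show ?thesis .
qed

lemma Rsq_le:
  assumes \<mu>: "0 < \<mu>" and \<omega>: "0 < \<omega>" "\<omega> \<le> min (\<mu> / (18 * \<delta>)) (1 / (4 * L))"
  shows "Rsq n F D \<omega> x0 xs k
    \<le> ennreal ((1 - \<omega> * \<mu> / 2) ^ k) * Rsq n F D \<omega> x0 xs 0 + ennreal (24 * \<omega> * s2 / \<mu>)"
proof -
  have "\<mu> \<le> L" using root lip qsm by (rule quasi_strongly_monotone_le_lipschitz)
  note step = speg_step_size_conditions[OF \<mu> this \<delta> \<omega>]
  have "Rsq n F D \<omega> x0 xs k
      \<le> ennreal ((1 - \<omega> * \<mu> / 2) ^ k) * Rsq n F D \<omega> x0 xs 0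
        + ennreal (12 * \<omega>\<^sup>2 * s2 / (1 - (1 - \<omega> * \<mu> / 2)))"
    using Rsq_Suc_le[OF less_imp_le[OF \<omega>(1)] step] step(3) \<mu> \<omega>(1) s2
    by (intro ennreal_affine_recurrence_le) auto
  also have "12 * \<omega>\<^sup>2 * s2 / (1 - (1 - \<omega> * \<mu> / 2)) = 24 * \<omega> * s2 / \<mu>"
    using \<mu> \<omega>(1) by (simp add: field_simps power2_eq_square)
  finally show ?thesis .
qed

lemma nn_integral_last_iterate_le:
  assumes \<mu>: "0 < \<mu>" and \<delta>_pos: "0 < \<delta>" and \<epsilon>: "0 < \<epsilon>"
    and \<omega>: "\<omega> = (if s2 = 0 then min (\<mu> / (18 * \<delta>)) (1 / (4 * L))
             else min (min (\<mu> / (18 * \<delta>)) (1 / (4 * L))) (\<epsilon> * \<mu> / (48 * s2)))"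
    and K: "real K \<ge> max (max (8 * L / \<mu>) (36 * \<delta> / \<mu>^2)) (96 * s2 / (\<epsilon> * \<mu>^2))
                   * ln (2 * enn2real (Rsq n F D \<omega> x0 xs 0) / \<epsilon>)"
  shows "(\<integral>\<^sup>+ w. ennreal ((norm (fst (speg_state n F (\<lambda>_. \<omega>) (\<lambda>_. \<omega>) x0 w K) - xs))\<^sup>2)
            \<partial>iid_samples D) \<le> ennreal \<epsilon>"
proof -
  have "\<mu> \<le> L" using root lip qsm by (rule quasi_strongly_monotone_le_lipschitz)
  with \<mu> have "0 < L" by simp
  note choice = speg_step_size_choice[OF \<mu> \<delta>_pos this s2 \<epsilon> \<omega>]
  have "\<omega> * \<mu> \<le> 1/4" using speg_step_size_conditions[OF \<mu> \<open>\<mu> \<le> L\<close> \<delta> choice(1,2)] by simp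
  with choice(1) \<mu> have t: "0 < \<omega> * \<mu> / 2" "\<omega> * \<mu> / 2 \<le> 1" by simp_all
  define r where "r = (norm (x0 - xs))\<^sup>2"
  have R0: "Rsq n F D \<omega> x0 xs 0 = ennreal r" unfolding r_def by (rule Rsq_0)
  have "ln (r / (\<epsilon> / 2)) = ln (2 * enn2real (Rsq n F D \<omega> x0 xs 0) / \<epsilon>)"
    unfolding R0 r_def by (simp add: mult.commute)
  from one_minus_power_mult_le[OF t _ _ choice(4) K[folded this]]
  have geom: "(1 - \<omega> * \<mu> / 2) ^ K * r \<le> \<epsilon> / 2" using \<epsilon> by (simp add: r_def)
  have "(\<integral>\<^sup>+ w. ennreal ((norm (fst (speg_state n F (\<lambda>_. \<omega>) (\<lambda>_. \<omega>) x0 w K) - xs))\<^sup>2)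
      \<partial>iid_samples D) \<le> Rsq n F D \<omega> x0 xs K"
    unfolding Rsq_def by (intro nn_integral_mono ennreal_leI) simp
  also have "\<dots> \<le> ennreal ((1 - \<omega> * \<mu> / 2) ^ K) * ennreal r + ennreal (24 * \<omega> * s2 / \<mu>)"
    using Rsq_le[OF \<mu> choice(1,2), of x0 K] unfolding R0 .
  also have "\<dots> = ennreal ((1 - \<omega> * \<mu> / 2) ^ K * r + 24 * \<omega> * s2 / \<mu>)"
    using t choice(1) s2 \<mu> by (simp add: r_def ennreal_mult ennreal_plus)
  also have "\<dots> \<le> ennreal \<epsilon>"
    using geom choice(3) by (intro ennreal_leI) linarith
  finally show ?thesis .
qed

end

end

end

theorem theorem4p1:
  fixes n :: nat and F :: "nat \<Rightarrow> 'a::euclidean_space \<Rightarrow> 'a"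
    and D :: "(nat \<Rightarrow> real) measure" and xs x0 :: 'a
    and L \<mu> \<delta> s2 :: real
  assumes n: "n \<ge> 1"
    and Fmeas: "\<And>i. i < n \<Longrightarrow> F i \<in> borel_measurable borel"
    and D: "sampling_distribution n D"
    and root: "Fmean n F xs = 0"
    and lip: "L-lipschitz_on UNIV (Fmean n F)"
    and mu: "\<mu> > 0"
    and qsm: "\<And>x. inner (Fmean n F x) (x - xs) \<ge> \<mu> * (norm (x - xs))^2"
    and delta: "\<delta> > 0"
    and ER: "\<And>x. (\<integral>\<^sup>+ v. ennreal ((norm ((Fsamp n F v x - Fsamp n F v xs)
                         - (Fmean n F x - Fmean n F xs)))^2) \<partial>D)
                  \<le> ennreal (\<delta> / 2 * (norm (x - xs))^2)"
    and sigma: "(\<integral>\<^sup>+ v. ennreal ((norm (Fsamp n F v xs))^2) \<partial>D) = ennreal s2"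
    and s2: "s2 \<ge> 0"
  shows
    "(\<forall>\<omega> k. 0 < \<omega> \<and> \<omega> \<le> min (\<mu> / (18 * \<delta>)) (1 / (4 * L)) \<longrightarrow>
        Rsq n F D \<omega> x0 xs k
          \<le> ennreal ((1 - \<omega> * \<mu> / 2)^k) * Rsq n F D \<omega> x0 xs 0 + ennreal (24 * \<omega> * s2 / \<mu>))
     \<and>
     (\<forall>\<epsilon> \<omega> K. \<epsilon> > 0 \<longrightarrow>
        \<omega> = (if s2 = 0 then min (\<mu> / (18 * \<delta>)) (1 / (4 * L))
             else min (min (\<mu> / (18 * \<delta>)) (1 / (4 * L))) (\<epsilon> * \<mu> / (48 * s2))) \<longrightarrow>
        real K \<ge> max (max (8 * L / \<mu>) (36 * \<delta> / \<mu>^2)) (96 * s2 / (\<epsilon> * \<mu>^2))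
                   * ln (2 * enn2real (Rsq n F D \<omega> x0 xs 0) / \<epsilon>) \<longrightarrow>
        (\<integral>\<^sup>+ w. ennreal ((norm (fst (speg_state n F (\<lambda>_. \<omega>) (\<lambda>_. \<omega>) x0 w K) - xs))^2)
            \<partial>iid_samples D) \<le> ennreal \<epsilon>)"
proof -
  note hyps = Fmeas D root ER sigma less_imp_le[OF delta] s2 lip qsm mu
  show ?thesis
    using Rsq_le[OF hyps] nn_integral_last_iterate_le[OF hyps delta] by auto
qed

end
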